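(* Let $\mu,\nu$ be subdistributions over nondeterministic expressions with $\mu\Rightarrow\nu$. Then there is a subdistribution $\rho$ with $\rho\le\mu$ and $\rho\le\nu$ such that $\mu-\rho\xRightarrow{\tau}\nu-\rho$.
   Context: Fix a set $\mathsf{Act}$ of actions containing $\tau$. Nondeterministic expressions: $E ::= 0 \mid X \mid \alpha.P \mid \mathrm{rec}\,X.E \mid E + E$; probabilistic expressions: $P ::= \partial(E) \mid P \oplus_p P$ ($0<p<1$). Subdistributions $\mu$ over $S$: $\mu:S\to\mathbb R_{\ge0}$ with $|\mu|=\sum\mu(s)\le1$; $\delta_s$ Dirac; sums, differences and $\le$ pointwise. Semantics: least relations with $\partial(E)\mapsto\delta_E$; $P\oplus_pQ\mapsto p\mu+(1-p)\nu$ if $P\mapsto\mu,Q\mapsto\nu$; $\alpha.P\xrightarrow{\alpha}\mu$ if $P\mapsto\mu$; $\mathrm{rec}\,X.E\xrightarrow{\alpha}\mu$ if $E[\mathrm{rec}\,X.E/X]\xrightarrow{\alpha}\mu$; $E+F\xrightarrow{\alpha}\mu$ and $F+E\xrightarrow{\alpha}\mu$ if $E\xrightarrow{\alpha}\mu$. Combined transitions on subdistributions: least relation with $\delta_E\xrightarrow{\alpha}\mu$ if $E\xrightarrow{\alpha}\mu$, closed under $\sum p_i\nu_i\xrightarrow{\alpha}\sum p_i\mu_i$ ($\nu_i\xrightarrow{\alpha}\mu_i$, $p_i\ge0$, $\sum p_i\le1$). A derivation is a sequence $(\mu_i^{\to},\mu_i^{\times})_{i\in\mathbb N}$ of subdistributions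 with $\mu_i^{\to}\xrightarrow{\tau}\mu^{\to}_{i+1}+\mu^{\times}_{i+1}$ for all $i$; $\mu\Rightarrow\nu$ iff some derivation has $\mu=\mu_0^{\to}+\mu_0^{\times}$ and $\nu=\sum_i\mu_i^\times$. $\mu\xRightarrow{\tau}\nu$ iff $\mu\Rightarrow\rho\xrightarrow{\tau}\eta\Rightarrow\nu$ for some $\rho,\eta$. *)

theory Defs
  imports "HOL-Analysis.Analysis" "HOL-Library.Function_Algebras"
begin

datatype 'a nexp =
    NNil
  | NVar nat
  | NPref 'a "'a pexp"
  | NRec nat "'a nexp"
  | NChoice "'a nexp" "'a nexp"
and 'a pexp =
    PDirac "'a nexp"
  | PChoice "'a pexp" real "'a pexp"

primrec wf_n :: "'a nexp \<Rightarrow> bool" and wf_p :: "'a pexp \<Rightarrow> bool" where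
  "wf_n NNil = True"
| "wf_n (NVar X) = True"
| "wf_n (NPref a P) = wf_p P"
| "wf_n (NRec X E) = wf_n E"
| "wf_n (NChoice E F) = (wf_n E \<and> wf_n F)"
| "wf_p (PDirac E) = wf_n E"
| "wf_p (PChoice P p Q) = (0 < p \<and> p < 1 \<and> wf_p P \<and> wf_p Q)"

primrec subst_n :: "nat \<Rightarrow> 'a nexp \<Rightarrow> 'a nexp \<Rightarrow> 'a nexp"
  and subst_p :: "nat \<Rightarrow> 'a nexp \<Rightarrow> 'a pexp \<Rightarrow> 'a pexp" where
  "subst_n X F NNil = NNil"
| "subst_n X F (NVar Y) = (if Y = X then F else NVar Y)"
| "subst_n X F (NPref a P) = NPref a (subst_p X F P)"
| "subst_n X F (NRec Y E) = (if Y = X then NRec Y E else NRec Y (subst_n X F E))"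
| "subst_n X F (NChoice E E') = NChoice (subst_n X F E) (subst_n X F E')"
| "subst_p X F (PDirac E) = PDirac (subst_n X F E)"
| "subst_p X F (PChoice P p Q) = PChoice (subst_p X F P) p (subst_p X F Q)"

type_synonym 'a sd = "'a nexp \<Rightarrow> real"

definition subdist :: "'a sd \<Rightarrow> bool" where
  "subdist \<mu> \<longleftrightarrow> (\<forall>s. 0 \<le> \<mu> s) \<and> \<mu> summable_on UNIV \<and> infsum \<mu> UNIV \<le> 1
      \<and> (\<forall>s. \<mu> s \<noteq> 0 \<longrightarrow> wf_n s)"

definition dirac :: "'a nexp \<Rightarrow> 'a sd" where
  "dirac E = (\<lambda>s. if s = E then 1 else 0)"

inductive pev :: "'a pexp \<Rightarrow> 'a sd \<Rightarrow> bool" where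
  pev_dirac: "pev (PDirac E) (dirac E)"
| pev_choice: "pev P \<mu> \<Longrightarrow> pev Q \<nu> \<Longrightarrow> pev (PChoice P p Q) (\<lambda>s. p * \<mu> s + (1 - p) * \<nu> s)"

inductive step :: "'a nexp \<Rightarrow> 'a \<Rightarrow> 'a sd \<Rightarrow> bool" where
  step_pref: "pev P \<mu> \<Longrightarrow> step (NPref a P) a \<mu>"
| step_rec: "step (subst_n X (NRec X E) E) a \<mu> \<Longrightarrow> step (NRec X E) a \<mu>"
| step_choiceL: "step E a \<mu> \<Longrightarrow> step (NChoice E F) a \<mu>"
| step_choiceR: "step E a \<mu> \<Longrightarrow> step (NChoice F E) a \<mu>"

text \<open>Combined transitions on subdistributions (closure under countable,
  hence in particular finite, subconvex combinations).\<close>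

inductive ctrans :: "'a sd \<Rightarrow> 'a \<Rightarrow> 'a sd \<Rightarrow> bool" where
  ctrans_base: "step E a \<mu> \<Longrightarrow> ctrans (dirac E) a \<mu>"
| ctrans_comb: "(\<And>i. ctrans (\<nu> i) a (\<mu> i)) \<Longrightarrow> (\<And>i. 0 \<le> p i) \<Longrightarrow> summable p \<Longrightarrow> suminf p \<le> 1
    \<Longrightarrow> ctrans (\<lambda>s. \<Sum>i. p i * \<nu> i s) a (\<lambda>s. \<Sum>i. p i * \<mu> i s)"

definition derivation :: "'a \<Rightarrow> (nat \<Rightarrow> 'a sd) \<Rightarrow> (nat \<Rightarrow> 'a sd) \<Rightarrow> bool" where
  "derivation tau mto mx \<longleftrightarrow> (\<forall>i. subdist (mto i) \<and> subdist (mx i))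
     \<and> (\<forall>i. ctrans (mto i) tau (mto (Suc i) + mx (Suc i)))"

definition weak :: "'a \<Rightarrow> 'a sd \<Rightarrow> 'a sd \<Rightarrow> bool" where
  "weak tau \<mu> \<nu> \<longleftrightarrow> (\<exists>mto mx. derivation tau mto mx \<and> \<mu> = mto 0 + mx 0
     \<and> \<nu> = (\<lambda>s. \<Sum>i. mx i s))"

definition weak_tau :: "'a \<Rightarrow> 'a sd \<Rightarrow> 'a sd \<Rightarrow> bool" where
  "weak_tau tau \<mu> \<nu> \<longleftrightarrow> (\<exists>\<rho> \<eta>. weak tau \<mu> \<rho> \<and> ctrans \<rho> tau \<eta> \<and> weak tau \<eta> \<nu>)"

end

theory Submission
  imports Defs
begin

text \<open>Take \<open>\<rho>\<close> to be the part of \<open>\<mu>\<close> that the derivation stops at once,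
  \<open>\<rho> = \<mu>\<^sub>0\<^sup>\<times>\<close>. Then \<open>\<mu> - \<rho> = \<mu>\<^sub>0\<^sup>\<rightarrow>\<close> performs the first
  \<open>\<tau>\<close>-step of the derivation, and the shifted derivation from
  \<open>\<mu>\<^sub>1\<^sup>\<rightarrow> + \<mu>\<^sub>1\<^sup>\<times>\<close> yields the tail \<open>\<Sum>\<^sub>i \<mu>\<^sub>i\<^sub>+\<^sub>1\<^sup>\<times> = \<nu> - \<rho>\<close>.
  The last equation needs the series \<open>\<Sum>\<^sub>i \<mu>\<^sub>i\<^sup>\<times>(s)\<close> to converge,
  which holds because combined transitions out of well-formed expressions do not
  increase mass, so the stopped masses have a bounded sum.\<close>

lemma
  fixes h :: "nat \<Rightarrow> 'b \<Rightarrow> real"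
  assumes nonneg: "\<And>i s. 0 \<le> h i s"
    and rows: "\<And>i. h i summable_on UNIV"
    and total: "summable (\<lambda>i. infsum (h i) UNIV)"
  shows summable_suminf_nonneg_pointwise: "summable (\<lambda>i. h i s)"
    and has_sum_suminf_nonneg: "((\<lambda>s. \<Sum>i. h i s) has_sum (\<Sum>i. infsum (h i) UNIV)) UNIV"
proof -
  let ?S = "\<Sum>i. infsum (h i) UNIV"
  have "((\<lambda>i. infsum (h i) UNIV) has_sum ?S) UNIV"
    by (rule sums_nonneg_imp_has_sum[OF summable_sums[OF total]]) (simp add: infsum_nonneg nonneg)
  then have "((\<lambda>(i, s). h i s) has_sum ?S) (UNIV \<times> UNIV)"
    using rows nonneg
    by (intro has_sum_SigmaI[where g = "\<lambda>i. infsum (h i) UNIV"]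
          summable_on_SigmaI[where g = "\<lambda>i. infsum (h i) UNIV"])
       (auto dest: has_sum_imp_summable)
  then have swapped: "((\<lambda>(s, i). h i s) has_sum ?S) (UNIV \<times> UNIV)"
    by (subst (asm) has_sum_swap) (simp add: case_prod_unfold)
  show pointwise: "summable (\<lambda>i. h i s)" for s
    using summable_on_SigmaD1[of "\<lambda>s i. h i s", OF has_sum_imp_summable[OF swapped]]
    by (simp add: summable_on_imp_summable)
  show "((\<lambda>s. \<Sum>i. h i s) has_sum ?S) UNIV"
    by (rule has_sum_SigmaD[OF swapped])
       (simp add: sums_nonneg_imp_has_sum[OF summable_sums[OF pointwise]] nonneg)
qed

lemma
  fixes f :: "nat \<Rightarrow> 'b \<Rightarrow> real"
  assumes f_nonneg: "\<And>i s. 0 \<le> f i s" and f_summable: "\<And>i. f i summable_on UNIV"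
    and f_mass: "\<And>i. infsum (f i) UNIV \<le> 1"
    and p_nonneg: "\<And>i. 0 \<le> p i" and p_summable: "summable p"
  shows summable_subconvex_comb_mass: "summable (\<lambda>i. p i * infsum (f i) UNIV)"
    and summable_subconvex_comb_pointwise: "summable (\<lambda>i. p i * f i s)"
    and has_sum_subconvex_comb:
      "((\<lambda>s. \<Sum>i. p i * f i s) has_sum (\<Sum>i. p i * infsum (f i) UNIV)) UNIV"
proof -
  show mass: "summable (\<lambda>i. p i * infsum (f i) UNIV)"
    using p_nonneg f_mass f_nonneg
    by (intro summable_comparison_test'[OF p_summable]) (simp add: infsum_nonneg mult_left_le)
  have "infsum (\<lambda>s. p i * f i s) UNIV = p i * infsum (f i) UNIV" for i
    by (rule infsum_cmult_right')
  then show "summable (\<lambda>i. p i * f i s)"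
    and "((\<lambda>s. \<Sum>i. p i * f i s) has_sum (\<Sum>i. p i * infsum (f i) UNIV)) UNIV" for s
    using summable_suminf_nonneg_pointwise[of "\<lambda>i s. p i * f i s"]
      has_sum_suminf_nonneg[of "\<lambda>i s. p i * f i s"] mass
    by (simp_all add: f_nonneg p_nonneg f_summable summable_on_cmult_right)
qed

lemma wf_subst_n: "wf_n F \<Longrightarrow> wf_n E \<Longrightarrow> wf_n (subst_n X F E)"
  and wf_subst_p: "wf_n F \<Longrightarrow> wf_p P \<Longrightarrow> wf_p (subst_p X F P)"
  by (induct E and P) auto

lemma has_sum_dirac: "(dirac E has_sum 1) UNIV"
proof -
  have "(dirac E has_sum dirac E E) UNIV"
    by (rule has_sum_finite_neutralI[where B = "{E}"]) (auto simp: dirac_def)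
  then show ?thesis
    by (simp add: dirac_def)
qed

lemma pev_has_sum_one: "pev P \<mu> \<Longrightarrow> wf_p P \<Longrightarrow> (\<forall>s. 0 \<le> \<mu> s) \<and> (\<mu> has_sum 1) UNIV"
proof (induct rule: pev.induct)
  case (pev_dirac E)
  then show ?case
    using has_sum_dirac by (auto simp: dirac_def)
next
  case (pev_choice P \<mu> Q \<nu> p)
  then have "((\<lambda>s. p * \<mu> s + (1 - p) * \<nu> s) has_sum (p * 1 + (1 - p) * 1)) UNIV"
    by (intro has_sum_add has_sum_cmult_right) auto
  with pev_choice show ?case
    by auto
qed

lemma step_has_sum_one: "step E a \<mu> \<Longrightarrow> wf_n E \<Longrightarrow> (\<forall>s. 0 \<le> \<mu> s) \<and> (\<mu> has_sum 1) UNIV"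
  by (induct rule: step.induct) (auto simp: pev_has_sum_one wf_subst_n)

lemma ctrans_source_subprob:
  "ctrans \<nu> a \<mu> \<Longrightarrow> (\<forall>s. 0 \<le> \<nu> s) \<and> \<nu> summable_on UNIV \<and> infsum \<nu> UNIV \<le> 1"
proof (induct rule: ctrans.induct)
  case (ctrans_base E a \<mu>)
  show ?case
    using has_sum_imp_summable[OF has_sum_dirac[of E]] infsumI[OF has_sum_dirac[of E]]
    by (simp add: dirac_def)
next
  case (ctrans_comb \<nu> a \<mu> p)
  then have "((\<lambda>s. \<Sum>i. p i * \<nu> i s) has_sum (\<Sum>i. p i * infsum (\<nu> i) UNIV)) UNIV"
    by (intro has_sum_subconvex_comb) auto
  moreover have "(\<Sum>i. p i * infsum (\<nu> i) UNIV) \<le> (\<Sum>i. p i)"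
    using ctrans_comb summable_subconvex_comb_mass[of \<nu> p]
    by (intro suminf_le) (auto simp: infsum_nonneg mult_left_le)
  moreover have "0 \<le> (\<Sum>i. p i * \<nu> i s)" for s
    using ctrans_comb summable_subconvex_comb_pointwise[of \<nu> p]
    by (intro suminf_nonneg) auto
  ultimately show ?case
    using ctrans_comb(5) by (auto simp: infsumI has_sum_imp_summable)
qed

text \<open>Well-formedness of the source is essential: a choice \<open>P \<oplus>\<^sub>p Q\<close>
  with \<open>p \<notin> (0,1)\<close> produces negative weights.\<close>

lemma ctrans_mass_le:
  "ctrans \<nu> a \<mu> \<Longrightarrow> (\<forall>s. \<nu> s \<noteq> 0 \<longrightarrow> wf_n s) \<Longrightarrow>
    (\<forall>s. 0 \<le> \<mu> s) \<and> \<mu> summable_on UNIV \<and> infsum \<mu> UNIV \<le> infsum \<nu> UNIV"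
proof (induct rule: ctrans.induct)
  case (ctrans_base E a \<mu>)
  then have "wf_n E"
    by (auto simp: dirac_def)
  with ctrans_base have "(\<forall>s. 0 \<le> \<mu> s) \<and> (\<mu> has_sum 1) UNIV"
    by (intro step_has_sum_one)
  then show ?case
    using infsumI[OF has_sum_dirac[of E]] by (auto simp: infsumI has_sum_imp_summable)
next
  case (ctrans_comb \<nu> a \<mu> p)
  have \<nu>_subprob: "(\<forall>s. 0 \<le> \<nu> i s) \<and> \<nu> i summable_on UNIV \<and> infsum (\<nu> i) UNIV \<le> 1" for i
    using ctrans_source_subprob[OF ctrans_comb(1)] by blast
  have \<nu>_pointwise: "summable (\<lambda>i. p i * \<nu> i s)" for s
    using \<nu>_subprob ctrans_comb(3,4) summable_subconvex_comb_pointwise[of \<nu> p] by blast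
  have \<nu>_has_sum: "((\<lambda>s. \<Sum>i. p i * \<nu> i s) has_sum (\<Sum>i. p i * infsum (\<nu> i) UNIV)) UNIV"
    using \<nu>_subprob ctrans_comb(3,4) by (intro has_sum_subconvex_comb) auto
  have \<nu>_mass: "summable (\<lambda>i. p i * infsum (\<nu> i) UNIV)"
    using \<nu>_subprob ctrans_comb(3,4) by (intro summable_subconvex_comb_mass) auto
  define h where "h i = (\<lambda>s. p i * \<mu> i s)" for i
  have h: "(\<forall>s. 0 \<le> h i s) \<and> h i summable_on UNIV \<and> infsum (h i) UNIV \<le> p i * infsum (\<nu> i) UNIV"
    for i
  proof (cases "p i = 0")
    \<comment> \<open>a component with weight 0 may start from ill-formed expressions\<close>
    case True
    then show ?thesis
      using \<nu>_subprob by (simp add: h_def infsum_nonneg)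
  next
    case False
    with ctrans_comb(3) have "0 < p i"
      by (simp add: order_less_le)
    have "wf_n s" if "\<nu> i s \<noteq> 0" for s
    proof -
      have "0 < p i * \<nu> i s"
        using that \<nu>_subprob \<open>0 < p i\<close> by (simp add: order_less_le)
      also have "\<dots> \<le> (\<Sum>j. p j * \<nu> j s)"
        using sum_le_suminf[OF \<nu>_pointwise, of "{i}"] \<nu>_subprob ctrans_comb(3) by simp
      finally show ?thesis
        using ctrans_comb(6) by auto
    qed
    then show ?thesis
      using ctrans_comb(2) \<open>0 < p i\<close>
      by (auto simp: h_def infsum_cmult_right' summable_on_cmult_right)
  qed
  have h_mass: "summable (\<lambda>i. infsum (h i) UNIV)"
    using h by (intro summable_comparison_test'[OF \<nu>_mass]) (simp add: infsum_nonneg)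
  have h_has_sum: "((\<lambda>s. \<Sum>i. h i s) has_sum (\<Sum>i. infsum (h i) UNIV)) UNIV"
    using h h_mass by (intro has_sum_suminf_nonneg) auto
  have "(\<Sum>i. infsum (h i) UNIV) \<le> (\<Sum>i. p i * infsum (\<nu> i) UNIV)"
    using h h_mass \<nu>_mass by (intro suminf_le) auto
  also have "\<dots> = infsum (\<lambda>s. \<Sum>i. p i * \<nu> i s) UNIV"
    using \<nu>_has_sum by (simp add: infsumI)
  finally have "infsum (\<lambda>s. \<Sum>i. h i s) UNIV \<le> infsum (\<lambda>s. \<Sum>i. p i * \<nu> i s) UNIV"
    using h_has_sum by (simp add: infsumI)
  moreover have "0 \<le> (\<Sum>i. h i s)" for s
  proof (rule suminf_nonneg)
    show "summable (\<lambda>i. h i s)"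
      using h h_mass summable_suminf_nonneg_pointwise[of h] by blast
  qed (use h in auto)
  ultimately show ?case
    using has_sum_imp_summable[OF h_has_sum] by (simp add: h_def)
qed

lemma derivation_mass_bound:
  assumes "derivation tau mto mx"
  shows "(\<Sum>i<Suc n. infsum (mx i) UNIV) + infsum (mto n) UNIV
    \<le> infsum (mto 0) UNIV + infsum (mx 0) UNIV"
proof (induct n)
  case 0
  show ?case
    by simp
next
  case (Suc n)
  have sd: "subdist (mto (Suc n))" "subdist (mx (Suc n))" "subdist (mto n)"
    and ct: "ctrans (mto n) tau (mto (Suc n) + mx (Suc n))"
    using assms by (auto simp: derivation_def)
  have "infsum (mto (Suc n)) UNIV + infsum (mx (Suc n)) UNIV = infsum (mto (Suc n) + mx (Suc n)) UNIV"
    using sd by (simp add: plus_fun_def subdist_def infsum_add)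
  also have "\<dots> \<le> infsum (mto n) UNIV"
    using ctrans_mass_le[OF ct] sd(3) by (simp add: subdist_def)
  finally show ?case
    using Suc by simp
qed

lemma derivation_summable_stopped:
  assumes "derivation tau mto mx"
  shows "summable (\<lambda>i. mx i s)"
proof -
  have sd: "subdist (mto i)" "subdist (mx i)" for i
    using assms by (auto simp: derivation_def)
  have mass_nonneg: "0 \<le> infsum (mto i) UNIV" "0 \<le> infsum (mx i) UNIV" for i
    using sd by (auto simp: subdist_def infsum_nonneg)
  have "(\<Sum>i<n. infsum (mx i) UNIV) \<le> infsum (mto 0) UNIV + infsum (mx 0) UNIV" for n
    using derivation_mass_bound[OF assms, of n] mass_nonneg[of n] by simp
  then have mass_summable: "summable (\<lambda>i. infsum (mx i) UNIV)"
    using mass_nonneg by (intro summableI_nonneg_bounded) auto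
  have "mx i s \<le> infsum (mx i) UNIV" for i
    using infsum_mono_neutral[of "mx i" "{s}" "mx i" UNIV] sd(2)[of i]
    by (simp add: subdist_def)
  then show ?thesis
    using sd(2) by (intro summable_comparison_test'[OF mass_summable]) (simp add: subdist_def)
qed

lemma ctrans_zero: "ctrans \<nu> a \<mu> \<Longrightarrow> ctrans 0 a 0"
  using ctrans_comb[of "\<lambda>_. \<nu>" a "\<lambda>_. \<mu>" "\<lambda>_. 0"] by (simp add: zero_fun_def)

lemma weak_refl:
  assumes "subdist \<mu>" and "ctrans 0 tau 0"
  shows "weak tau \<mu> \<mu>"
  unfolding weak_def
proof (intro exI conjI)
  let ?mx = "\<lambda>i::nat. if i = 0 then \<mu> else 0"
  have "subdist (0 :: 'a sd)"
    by (simp add: subdist_def zero_fun_def)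
  then show "derivation tau (\<lambda>_. 0) ?mx"
    using assms by (auto simp: derivation_def)
  show "\<mu> = (\<lambda>s. \<Sum>i. ?mx i s)"
  proof
    fix s
    have "(\<lambda>i. ?mx i s) = (\<lambda>i. if i = 0 then \<mu> s else 0)"
      by auto
    then show "\<mu> s = (\<Sum>i. ?mx i s)"
      using sums_single[of 0 "\<lambda>_. \<mu> s"] by (simp add: sums_iff)
  qed
qed simp

lemma weak_tau_derivation_tail:
  assumes "derivation tau mto mx"
  shows "weak_tau tau (mto 0) (\<lambda>s. \<Sum>i. mx (Suc i) s)"
  unfolding weak_tau_def
proof (intro exI conjI)
  have ct: "ctrans (mto i) tau (mto (Suc i) + mx (Suc i))" for i
    using assms by (simp add: derivation_def)
  show "weak tau (mto 0) (mto 0)"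
    using assms ctrans_zero[OF ct] by (intro weak_refl) (auto simp: derivation_def)
  show "ctrans (mto 0) tau (mto 1 + mx 1)"
    using ct[of 0] by simp
  show "weak tau (mto 1 + mx 1) (\<lambda>s. \<Sum>i. mx (Suc i) s)"
    unfolding weak_def using assms
    by (intro exI[of _ "\<lambda>i. mto (Suc i)"] exI[of _ "\<lambda>i. mx (Suc i)"]) (simp add: derivation_def)
qed

theorem mainTheorem11:
  fixes tau :: 'a and \<mu> \<nu> :: "'a sd"
  assumes "subdist \<mu>" and "subdist \<nu>" and "weak tau \<mu> \<nu>"
  shows "\<exists>\<rho>. subdist \<rho> \<and> \<rho> \<le> \<mu> \<and> \<rho> \<le> \<nu> \<and> weak_tau tau (\<mu> - \<rho>) (\<nu> - \<rho>)"
proof -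
  from assms(3) obtain mto mx where der: "derivation tau mto mx"
    and \<mu>: "\<mu> = mto 0 + mx 0" and \<nu>: "\<nu> = (\<lambda>s. \<Sum>i. mx i s)"
    unfolding weak_def by blast
  have sd: "subdist (mto i)" "subdist (mx i)" for i
    using der by (auto simp: derivation_def)
  have summable: "summable (\<lambda>i. mx i s)" for s
    using derivation_summable_stopped[OF der] .
  have "mx 0 \<le> \<nu>"
    using sum_le_suminf[OF summable, of "{0}"] sd(2) by (auto simp: \<nu> le_fun_def subdist_def)
  moreover have "mx 0 \<le> \<mu>"
    using sd(1) by (simp add: \<mu> le_fun_def subdist_def)
  moreover have "\<nu> - mx 0 = (\<lambda>s. \<Sum>i. mx (Suc i) s)"
    by (simp add: \<nu> fun_diff_def suminf_split_head[OF summable])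
  ultimately show ?thesis
    using sd(2) weak_tau_derivation_tail[OF der] by (intro exI[of _ "mx 0"]) (simp add: \<mu>)
qed

end
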